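(* Let $f>0$ be an even $C^2$ function on $\mathbb{R}$ with $f'(v)\geq0$ for $v\geq0$ and $f'(v)^2\leq C_0 f''(v)f(v)$ for all $v$. Let $t\geq0$, $R>0$, and let $\phi$ be smooth on a neighbourhood of $\{t\}\times\{|x|\leq R\}$. Then, with a constant depending only on $C_0$, \[ \int_{|x|\leq R}f''(t-r)\phi^2\,dx\lesssim\int_{|x|\leq R}\Big[f(t+r)\big(L(r\phi)\big)^2+f(t-r)\big(\underline L(r\phi)\big)^2\Big]\frac{dx}{r^2}+|f'(t-R)|\int_{|x|=R}\phi^2\,R^2\,dS(\omega). \]
   Context: $r=|x|$, $\omega=x/r$, $\partial_r=\omega^i\partial_i$, $L=\partial_t+\partial_r$, $\underline L=\partial_t-\partial_r$; $dS(\omega)$ is the standard measure on the unit sphere. *)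

theory Defs
  imports "HOL-Analysis.Analysis"
begin

text \<open>Points of spacetime are pairs (s, y) with s the time and y in R^3.\<close>

fun iter_dderiv :: "'a::real_normed_vector list \<Rightarrow> ('a \<Rightarrow> real) \<Rightarrow> ('a \<Rightarrow> real)" where
  "iter_dderiv [] g = g"
| "iter_dderiv (v # vs) g = (\<lambda>p. frechet_derivative (iter_dderiv vs g) (at p) v)"

definition smooth_on :: "'a::real_normed_vector set \<Rightarrow> ('a \<Rightarrow> real) \<Rightarrow> bool" where
  "smooth_on U g \<longleftrightarrow> (\<forall>vs. iter_dderiv vs g differentiable_on U)"

text \<open>Null-frame derivatives L = d_t + d_r and Lbar = d_t - d_r, with d_r = omega . grad.\<close>
definition Lop :: "(real \<times> (real^3) \<Rightarrow> real) \<Rightarrow> real \<times> (real^3) \<Rightarrow> real" where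
  "Lop g p = frechet_derivative g (at p) (1, snd p /\<^sub>R norm (snd p))"

definition Lbar :: "(real \<times> (real^3) \<Rightarrow> real) \<Rightarrow> real \<times> (real^3) \<Rightarrow> real" where
  "Lbar g p = frechet_derivative g (at p) (1, - (snd p /\<^sub>R norm (snd p)))"

definition sph :: "real \<Rightarrow> real \<Rightarrow> real^3" where
  "sph \<theta> \<phi> = vector [sin \<theta> * cos \<phi>, sin \<theta> * sin \<phi>, cos \<theta>]"

definition sphere_integral :: "(real^3 \<Rightarrow> real) \<Rightarrow> real" where
  "sphere_integral g = (LBINT \<theta>=0..pi. (LBINT \<phi>=0..2*pi. g (sph \<theta> \<phi>) * sin \<theta>))"

end

theory Submission
  imports Defs
begin

text \<open>Put \<open>\<psi> = r\<phi>\<close> and use spherical coordinates \<open>x = r\<omega>\<close>, \<open>dx = r\<^sup>2 dr dS(\<omega>)\<close>, so that the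
left-hand side is \<open>\<integral>\<integral> f''(t-r) \<psi>\<^sup>2 dr dS\<close>. Along each ray
\<open>\<partial>\<^sub>r(-f'(t-r)\<psi>\<^sup>2) = f''(t-r)\<psi>\<^sup>2 - 2f'(t-r)\<psi>\<partial>\<^sub>r\<psi>\<close>, and \<open>\<psi>\<close> vanishes at \<open>r = 0\<close>, so the radial
integral of the right side is the boundary term. The cross term is absorbed: \<open>f'\<^sup>2 \<le> C\<^sub>0 f'' f\<close> gives
\<open>2f'\<psi>\<partial>\<^sub>r\<psi> \<le> f''\<psi>\<^sup>2/2 + 2C\<^sub>0 f(t-r)(\<partial>\<^sub>r\<psi>)\<^sup>2\<close>, and \<open>2\<partial>\<^sub>r\<psi> = L\<psi> - Lbar \<psi>\<close> together with
\<open>f(t-r) \<le> f(t+r)\<close> (\<open>f\<close> is even and nondecreasing on \<open>[0,\<infinity>)\<close>) bounds \<open>2f(t-r)(\<partial>\<^sub>r\<psi>)\<^sup>2\<close> by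
\<open>f(t+r)(L\<psi>)\<^sup>2 + f(t-r)(Lbar \<psi>)\<^sup>2\<close>. The constant is \<open>2 + 2C\<^sub>0\<close>.\<close>

section \<open>Spherical coordinates\<close>

lemma sph_nth [simp]:
  "sph a b $ 1 = sin a * cos b" "sph a b $ 2 = sin a * sin b" "sph a b $ 3 = cos a"
  by (simp_all add: sph_def)

lemma vec3_eqI: "(v::real^3) $ 1 = w $ 1 \<Longrightarrow> v $ 2 = w $ 2 \<Longrightarrow> v $ 3 = w $ 3 \<Longrightarrow> v = w"
  by (simp add: vec_eq_iff forall_3)

lemma norm_vec3: "norm (x::real^3) = sqrt ((x$1)\<^sup>2 + (x$2)\<^sup>2 + (x$3)\<^sup>2)"
  by (simp add: norm_eq_sqrt_inner inner_vec_def sum_3 power2_eq_square)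

lemma norm_sph [simp]: "norm (sph a b) = 1"
proof -
  have "(sin a * cos b)\<^sup>2 + (sin a * sin b)\<^sup>2 + (cos a)\<^sup>2 = (sin a)\<^sup>2 * ((cos b)\<^sup>2 + (sin b)\<^sup>2) + (cos a)\<^sup>2"
    by algebra
  then show ?thesis by (simp add: norm_vec3)
qed

lemma continuous_on_sph [continuous_intros]:
  fixes a b :: "'a::t2_space \<Rightarrow> real"
  assumes "continuous_on X a" "continuous_on X b"
  shows "continuous_on X (\<lambda>x. sph (a x) (b x))"
proof -
  have eq: "sph a b = (sin a * cos b) *\<^sub>R axis 1 1 + (sin a * sin b) *\<^sub>R axis 2 1 + cos a *\<^sub>R axis 3 1"
    for a b by (intro vec3_eqI) (simp_all add: axis_def)
  show ?thesis unfolding eq by (intro continuous_intros assms)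
qed

text \<open>Coordinates are ordered \<open>(\<theta>, \<phi>, r)\<close>, matching the parametrisation \<open>sph \<theta> \<phi>\<close> of the sphere.\<close>

definition spherical :: "real^3 \<Rightarrow> real^3" where
  "spherical v = v$3 *\<^sub>R sph (v$1) (v$2)"

definition spherical_corner :: "real \<Rightarrow> real^3" where
  "spherical_corner R = vector [pi, 2*pi, R]"

lemma mem_box_spherical_corner:
  "v \<in> box 0 (spherical_corner R) \<longleftrightarrow>
     0 < v$1 \<and> v$1 < pi \<and> 0 < v$2 \<and> v$2 < 2*pi \<and> 0 < v$3 \<and> v$3 < R"
  by (auto simp: mem_box_cart forall_3 spherical_corner_def)

lemma mem_cbox_spherical_corner:
  "v \<in> cbox 0 (spherical_corner R) \<longleftrightarrow>
     0 \<le> v$1 \<and> v$1 \<le> pi \<and> 0 \<le> v$2 \<and> v$2 \<le> 2*pi \<and> 0 \<le> v$3 \<and> v$3 \<le> R"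
  by (auto simp: mem_box_cart forall_3 spherical_corner_def)

lemma norm_spherical: "v$3 \<ge> 0 \<Longrightarrow> norm (spherical v) = v$3"
  by (simp add: spherical_def)

lemma spherical_cbox_subset_cball: "spherical ` cbox 0 (spherical_corner R) \<subseteq> cball 0 R"
  by (auto simp: mem_cbox_spherical_corner norm_spherical)

lemma inj_on_spherical: "inj_on spherical (box 0 (spherical_corner R))"
proof (rule inj_onI)
  fix v w assume "v \<in> box 0 (spherical_corner R)" "w \<in> box 0 (spherical_corner R)"
    and eq: "spherical v = spherical w"
  then have v: "0 < v$1" "v$1 < pi" "0 < v$2" "v$2 < 2*pi" "0 < v$3"
    and w: "0 < w$1" "w$1 < pi" "0 < w$2" "w$2 < 2*pi" "0 < w$3"
    by (auto simp: mem_box_spherical_corner)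
  have r: "v$3 = w$3" using norm_spherical[of v] norm_spherical[of w] eq v w by simp
  have s: "sph (v$1) (v$2) = sph (w$1) (w$2)" using eq r v by (simp add: spherical_def)
  have "cos (v$1) = cos (w$1)" using arg_cong[OF s, of "\<lambda>x. x$3"] by simp
  then have \<theta>: "v$1 = w$1" using cos_inj_pi v w by simp
  have "sin (v$1) > 0" using v by (simp add: sin_gt_zero)
  then have "cos (v$2) = cos (w$2)" "sin (v$2) = sin (w$2)"
    using arg_cong[OF s, of "\<lambda>x. x$1"] arg_cong[OF s, of "\<lambda>x. x$2"] \<theta> by simp_all
  then obtain n :: int where n: "v$2 = w$2 + 2*pi*n" using sin_cos_eq_iff by metis
  have "n = 0"
  proof (rule ccontr)
    assume "n \<noteq> 0"
    then have "\<bar>2*pi*n\<bar> \<ge> 2*pi" by (simp add: abs_mult)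
    then show False using n v w by linarith
  qed
  with n \<theta> r show "v = w" by (intro vec3_eqI) simp_all
qed

lemma arccos_ratio:
  assumes "r > 0" "\<rho> > 0" "\<rho>\<^sup>2 + z\<^sup>2 = r\<^sup>2"
  shows "sin (arccos (z/r)) = \<rho>/r" "cos (arccos (z/r)) = z/r" "0 < arccos (z/r)" "arccos (z/r) < pi"
proof -
  have "z\<^sup>2 < r\<^sup>2" using assms by (smt (verit) zero_less_power2)
  then have "\<bar>z\<bar> < r" using assms(1) by (metis abs_le_square_iff abs_of_pos not_le)
  then have b: "-1 < z/r" "z/r < 1" using assms(1) by (auto simp: field_simps abs_less_iff)
  have "1 - (z/r)\<^sup>2 = (\<rho>/r)\<^sup>2" "\<bar>z/r\<bar> \<le> 1" using assms b by (auto simp: field_simps)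
  then show "sin (arccos (z/r)) = \<rho>/r" using assms by (simp add: sin_arccos_abs)
  show "cos (arccos (z/r)) = z/r" using b by (simp add: cos_arccos)
  show "0 < arccos (z/r)" "arccos (z/r) < pi" using arccos_lt_bounded[OF b] by auto
qed

lemma spherical_image_box:
  assumes x: "x \<in> ball 0 R" and x2: "x$2 \<noteq> 0"
  shows "x \<in> spherical ` box 0 (spherical_corner R)"
proof -
  define r where "r = norm x"
  define \<rho> where "\<rho> = sqrt ((x$1)\<^sup>2 + (x$2)\<^sup>2)"
  have \<rho>: "\<rho> > 0" "\<rho>\<^sup>2 = (x$1)\<^sup>2 + (x$2)\<^sup>2" using x2 by (simp_all add: \<rho>_def add_nonneg_pos)
  have rsq: "r\<^sup>2 = \<rho>\<^sup>2 + (x$3)\<^sup>2" by (simp add: r_def norm_vec3 \<rho>)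
  have r: "r > 0" "r < R" using x x2 by (auto simp: r_def)
  define \<theta> where "\<theta> = arccos (x$3/r)"
  have \<theta>: "sin \<theta> = \<rho>/r" "cos \<theta> = x$3/r" "0 < \<theta>" "\<theta> < pi"
    using arccos_ratio[OF r(1) \<rho>(1), of "x$3"] rsq by (auto simp: \<theta>_def)
  obtain \<phi> where \<phi>: "sin \<phi> = x$2/\<rho>" "cos \<phi> = x$1/\<rho>" "0 < \<phi>" "\<phi> < 2*pi"
  proof (cases "x$2 > 0")
    case True
    note a = arccos_ratio[OF \<rho>(1) True, of "x$1"]
    show ?thesis by (rule that[of "arccos (x$1/\<rho>)"]) (use a \<rho> in auto)
  next
    case False
    then have "- x$2 > 0" using x2 by simp
    note a = arccos_ratio[OF \<rho>(1) this, of "x$1"]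
    show ?thesis
      by (rule that[of "2*pi - arccos (x$1/\<rho>)"]) (use a \<rho> in \<open>auto simp: sin_diff cos_diff\<close>)
  qed
  define v :: "real^3" where "v = vector [\<theta>, \<phi>, r]"
  have "v \<in> box 0 (spherical_corner R)" using \<theta> \<phi> r by (simp add: mem_box_spherical_corner v_def)
  moreover have "spherical v = x"
  proof -
    have e: "r * sin \<theta> = \<rho>" "r * cos \<theta> = x$3" "\<rho> * sin \<phi> = x$2" "\<rho> * cos \<phi> = x$1"
      using \<theta> \<phi> r \<rho> by (auto simp: field_simps)
    then have "r * (sin \<theta> * cos \<phi>) = x$1" "r * (sin \<theta> * sin \<phi>) = x$2"
      by (metis mult.assoc)+
    with e show ?thesis by (intro vec3_eqI) (simp_all add: spherical_def v_def)
  qed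
  ultimately show ?thesis by blast
qed

lemma negligible_cball_diff_spherical_image:
  "negligible (cball 0 R - spherical ` box 0 (spherical_corner R))"
proof -
  have "negligible {x::real^3. axis 2 1 \<bullet> x = 0}"
    by (rule negligible_hyperplane) (simp add: axis_eq_0_iff)
  then have "negligible (sphere 0 R \<union> {x::real^3. x$2 = 0})"
    by (simp add: inner_axis' negligible_sphere)
  moreover have "cball 0 R - spherical ` box 0 (spherical_corner R) \<subseteq> sphere 0 R \<union> {x. x$2 = 0}"
    using spherical_image_box[of _ R] by (force simp: dist_norm)
  ultimately show ?thesis by (rule negligible_subset)
qed

definition spherical_deriv :: "real^3 \<Rightarrow> real^3 \<Rightarrow> real^3" where
  "spherical_deriv v h = vector [
     v$3 * cos (v$1) * cos (v$2) * h$1 - v$3 * sin (v$1) * sin (v$2) * h$2 + sin (v$1) * cos (v$2) * h$3,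
     v$3 * cos (v$1) * sin (v$2) * h$1 + v$3 * sin (v$1) * cos (v$2) * h$2 + sin (v$1) * sin (v$2) * h$3,
     - v$3 * sin (v$1) * h$1 + cos (v$1) * h$3]"

lemma has_derivative_spherical: "(spherical has_derivative spherical_deriv v) (at v within S)"
proof -
  have nth: "((\<lambda>x::real^3. x$i) has_derivative (\<lambda>h. h$i)) F" for i F
    by (rule bounded_linear_imp_has_derivative) (rule bounded_linear_vec_nth)
  have "((\<lambda>x. spherical x $ i) has_derivative (\<lambda>h. spherical_deriv v h $ i)) (at v within S)" for i
    using exhaust_3[of i] unfolding spherical_def spherical_deriv_def
    by (auto intro!: derivative_eq_intros nth simp: algebra_simps)
  then show ?thesis
    by (subst has_derivative_componentwise_within) (auto simp: Basis_vec_def inner_axis)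
qed

lemma continuous_on_spherical: "continuous_on X spherical"
  using has_derivative_continuous[OF has_derivative_spherical]
  by (intro continuous_at_imp_continuous_on) blast

lemma det_spherical_deriv: "det (matrix (spherical_deriv v)) = (v$3)\<^sup>2 * sin (v$1)"
proof -
  have m: "matrix (spherical_deriv v) $ i $ j = spherical_deriv v (axis j 1) $ i" for i j
    by (simp add: matrix_def)
  have s: "(sin (v$1))\<^sup>2 + (cos (v$1))\<^sup>2 = 1" "(sin (v$2))\<^sup>2 + (cos (v$2))\<^sup>2 = 1" by simp_all
  show ?thesis
    unfolding det_3 m spherical_deriv_def by (simp add: axis_def) (use s in algebra)
qed

lemma absolutely_integrable_on_vec1_iff:
  "((\<lambda>x. vec (g x) :: real^1) absolutely_integrable_on S) \<longleftrightarrow> g absolutely_integrable_on S"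
  by (subst absolutely_integrable_componentwise_iff) (simp add: Basis_vec_def inner_axis)

lemma integral_cball_spherical:
  fixes F :: "real^3 \<Rightarrow> real"
  defines "G \<equiv> \<lambda>v. (v$3)\<^sup>2 * sin (v$1) * F (spherical v)"
  assumes G: "G absolutely_integrable_on box 0 (spherical_corner R)"
  shows "F absolutely_integrable_on cball 0 R"
    and "integral (cball 0 R) F = integral (box 0 (spherical_corner R)) G"
proof -
  let ?S = "box 0 (spherical_corner R)"
  let ?f = "\<lambda>x. vec (F x) :: real^1"
  have jac: "\<bar>det (matrix (spherical_deriv v))\<bar> *\<^sub>R ?f (spherical v) = vec (G v)" if "v \<in> ?S" for v
  proof -
    have "sin (v$1) > 0" using that by (simp add: mem_box_spherical_corner sin_gt_zero)
    then show ?thesis by (simp add: G_def det_spherical_deriv abs_mult vec_eq_iff)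
  qed
  have G_abs: "(\<lambda>v. vec (G v) :: real^1) absolutely_integrable_on ?S"
    using G by (simp add: absolutely_integrable_on_vec1_iff)
  then have G_int: "(\<lambda>v. vec (G v) :: real^1) integrable_on ?S"
    using set_lebesgue_integral_eq_integral(1) by blast
  have "(\<lambda>v. \<bar>det (matrix (spherical_deriv v))\<bar> *\<^sub>R ?f (spherical v)) absolutely_integrable_on ?S"
    by (rule absolutely_integrable_spike[OF G_abs negligible_empty]) (use jac in auto)
  moreover have "integral ?S (\<lambda>v. \<bar>det (matrix (spherical_deriv v))\<bar> *\<^sub>R ?f (spherical v))
      = integral ?S (\<lambda>v. vec (G v))"
    by (rule integral_cong) (use jac in auto)
  ultimately have cov: "?f absolutely_integrable_on spherical ` ?S \<and>
      integral (spherical ` ?S) ?f = integral ?S (\<lambda>v. vec (G v))"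
    using has_absolute_integral_change_of_variables[of ?S spherical spherical_deriv ?f]
      has_derivative_spherical inj_on_spherical by auto
  have n1: "negligible {x \<in> cball 0 R - spherical ` ?S. F x \<noteq> 0}"
    by (rule negligible_subset[OF negligible_cball_diff_spherical_image]) blast
  have "{x \<in> spherical ` ?S - cball 0 R. F x \<noteq> 0} = {}"
    using spherical_cbox_subset_cball[of R] box_subset_cbox[of 0 "spherical_corner R"] by blast
  then have n2: "negligible {x \<in> spherical ` ?S - cball 0 R. F x \<noteq> 0}"
    by (simp only: negligible_empty)
  show "F absolutely_integrable_on cball 0 R"
    using absolutely_integrable_spike_set_eq[OF n1 n2] cov absolutely_integrable_on_vec1_iff by blast
  have f_int: "?f integrable_on spherical ` ?S" using cov set_lebesgue_integral_eq_integral(1) by blast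
  have "integral (cball 0 R) F = integral (spherical ` ?S) F"
    using integral_spike_set[OF n1 n2] .
  also have "\<dots> = integral ?S (\<lambda>v. vec (G v) :: real^1) $ 1"
    using integral_component_eq_cart[OF f_int, of 1] cov by simp
  also have "\<dots> = integral ?S G" using integral_component_eq_cart[OF G_int, of 1] by simp
  finally show "integral (cball 0 R) F = integral ?S G" .
qed

section \<open>Iterated integrals\<close>

definition vector3 :: "real \<times> real \<times> real \<Rightarrow> real^3" where
  "vector3 p = vector [fst p, fst (snd p), snd (snd p)]"

definition triple :: "real^3 \<Rightarrow> real \<times> real \<times> real" where
  "triple x = (x$1, x$2, x$3)"

lemma vector3_triple [simp]: "vector3 (triple x) = x"
  by (simp add: vector3_def triple_def vec3_eqI)

lemma triple_vector3 [simp]: "triple (vector3 p) = p"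
  by (simp add: vector3_def triple_def)

lemma mem_cbox_vector3: "x \<in> cbox (vector3 u) (vector3 v) \<longleftrightarrow> triple x \<in> cbox u v"
  by (cases u; cases v) (simp add: mem_box_cart forall_3 cbox_Pair_eq vector3_def triple_def mem_Times_iff)

lemma vector3_image_cbox: "vector3 ` cbox u v = cbox (vector3 u) (vector3 v)"
proof (intro subset_antisym subsetI)
  fix x assume "x \<in> cbox (vector3 u) (vector3 v)"
  then have "triple x \<in> cbox u v" by (simp add: mem_cbox_vector3)
  then show "x \<in> vector3 ` cbox u v" by (metis vector3_triple image_eqI)
qed (auto simp: mem_cbox_vector3)

lemma triple_image_cbox: "triple ` cbox u v = cbox (triple u) (triple v)"
proof -
  have m: "p \<in> cbox (triple u) (triple v) \<longleftrightarrow> vector3 p \<in> cbox u v" for p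
    using mem_cbox_vector3[of "vector3 p" "triple u" "triple v"] by simp
  show ?thesis
  proof (intro subset_antisym subsetI)
    fix p assume "p \<in> cbox (triple u) (triple v)"
    then show "p \<in> triple ` cbox u v" using m by (metis triple_vector3 image_eqI)
  qed (use m in auto)
qed

lemma measure_vector3_image_cbox:
  "measure lborel (vector3 ` cbox u v) = 1 * measure lborel (cbox u v)"
proof -
  obtain a1 a2 a3 b1 b2 b3 where uv: "u = (a1,a2,a3)" "v = (b1,b2,b3)" by (cases u; cases v) auto
  have c: "measure lborel (cbox u v) = measure lborel {a1..b1} * (measure lborel {a2..b2} * measure lborel {a3..b3})"
    by (simp add: uv content_Pair)
  have ex3: "(\<exists>i::3. P i) \<longleftrightarrow> P 1 \<or> P 2 \<or> P 3" for P by (metis exhaust_3)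
  show ?thesis
  proof (cases "a1 \<le> b1 \<and> a2 \<le> b2 \<and> a3 \<le> b3")
    case True
    then have "cbox (vector3 u) (vector3 v) \<noteq> {}"
      unfolding interval_eq_empty_cart ex3 uv vector3_def by (simp add: not_less)
    then have "measure lborel (cbox (vector3 u) (vector3 v)) = (b1 - a1) * (b2 - a2) * (b3 - a3)"
      unfolding content_cbox_if_cart UNIV_3 by (simp add: uv vector3_def)
    then show ?thesis using True c by (simp add: vector3_image_cbox)
  next
    case False
    then have "cbox (vector3 u) (vector3 v) = {}"
      unfolding interval_eq_empty_cart ex3 uv vector3_def by (simp add: not_le)
    then show ?thesis using False c by (auto simp: vector3_image_cbox)
  qed
qed

lemma continuous_vector3: "continuous (at x) vector3"
proof -
  have "linear vector3" by (rule linearI) (auto intro!: vec3_eqI simp: vector3_def)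
  then show ?thesis by (intro linear_continuous_at) (simp add: linear_conv_bounded_linear)
qed

lemma integral_cbox3_iterated:
  fixes G :: "real^3 \<Rightarrow> real"
  assumes cont: "continuous_on (cbox u v) G"
  shows "integral (cbox u v) G =
    integral {u$1..v$1} (\<lambda>a. integral {u$2..v$2} (\<lambda>b. integral {u$3..v$3} (\<lambda>c. G (vector [a,b,c]))))"
proof -
  let ?B = "cbox (u$1, u$2, u$3) (v$1, v$2, v$3)"
  have "triple u = (u$1, u$2, u$3)" "triple v = (v$1, v$2, v$3)"
    by (simp_all add: triple_def)
  then have B: "triple ` cbox u v = ?B" "vector3 ` ?B = cbox u v"
    by (simp_all add: triple_image_cbox vector3_image_cbox flip: \<open>triple u = _\<close> \<open>triple v = _\<close>)
  have cont3: "continuous_on ?B (\<lambda>p. G (vector3 p))"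
    using continuous_on_compose2[OF cont continuous_at_imp_continuous_on[OF ballI[OF continuous_vector3]]]
    by (metis B(2) order_refl)
  have "(G has_integral integral (cbox u v) G) (cbox u v)"
    using integrable_continuous[OF cont] by blast
  then have "((\<lambda>p. G (vector3 p)) has_integral (1/1) *\<^sub>R integral (cbox u v) G) (triple ` cbox u v)"
    by (intro has_integral_twiddle[OF _ triple_vector3 vector3_triple continuous_vector3 _ _
          measure_vector3_image_cbox])
       (auto simp: vector3_image_cbox triple_image_cbox simp del: split_paired_Ex)
  then have "integral (cbox u v) G = integral ?B (\<lambda>p. G (vector3 p))"
    by (simp add: B integral_unique)
  also have "\<dots> = integral {u$1..v$1} (\<lambda>a. integral (cbox (u$2, u$3) (v$2, v$3)) (\<lambda>y. G (vector3 (a, y))))"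
    using cont3 by (simp add: integral_prod_continuous)
  also have "\<dots> = integral {u$1..v$1} (\<lambda>a. integral {u$2..v$2} (\<lambda>b. integral {u$3..v$3} (\<lambda>c. G (vector3 (a, b, c)))))"
  proof (rule integral_cong)
    fix a assume "a \<in> {u$1..v$1}"
    then have "continuous_on (cbox (u$2, u$3) (v$2, v$3)) (\<lambda>y. G (vector3 (a, y)))"
      by (intro continuous_on_compose2[OF cont3]) 
         (auto intro!: continuous_intros simp: cbox_Pair_eq mem_Times_iff)
    then show "integral (cbox (u$2, u$3) (v$2, v$3)) (\<lambda>y. G (vector3 (a, y))) =
        integral {u$2..v$2} (\<lambda>b. integral {u$3..v$3} (\<lambda>c. G (vector3 (a, b, c))))"
      by (simp add: integral_prod_continuous)
  qed
  finally show ?thesis by (simp add: vector3_def)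
qed

lemma sphere_integral_eq_integral:
  assumes "continuous_on (sphere 0 1) g"
  shows "sphere_integral g = integral {0..pi} (\<lambda>a. integral {0..2*pi} (\<lambda>b. g (sph a b) * sin a))"
proof -
  define h where "h a b = g (sph a b) * sin a" for a b
  have cont: "continuous_on UNIV (\<lambda>p. h (fst p) (snd p))"
    unfolding h_def by (intro continuous_intros continuous_on_compose2[OF assms]) auto
  then have "continuous_on X (h a)" for a X
    using continuous_on_compose2[OF cont, of X "Pair a"] by (simp add: continuous_on_Pair)
  then have inner: "(LBINT b=0..2*pi. h a b) = integral {0..2*pi} (h a)" for a
    using interval_integral_eq_integral[OF _ borel_integrable_atLeastAtMost', of 0 "2*pi" "h a"]
    by (simp add: zero_ereal_def)
  have outer: "continuous_on {0..pi} (\<lambda>a. integral (cbox 0 (2*pi)) (h a))"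
    by (rule integral_continuous_on_param) (rule continuous_on_subset[OF cont[unfolded case_prod_beta[symmetric]]], auto)
  then have "(LBINT a=0..pi. integral {0..2*pi} (h a)) = integral {0..pi} (\<lambda>a. integral {0..2*pi} (h a))"
    using interval_integral_eq_integral[OF _ borel_integrable_atLeastAtMost'[OF outer]]
    by (simp add: zero_ereal_def)
  then show ?thesis unfolding sphere_integral_def h_def[symmetric] inner .
qed

lemma absolutely_integrable_on_box_of_continuous:
  fixes g :: "'a::euclidean_space \<Rightarrow> real"
  assumes "continuous_on (cbox a b) g"
  shows "g absolutely_integrable_on box a b"
  by (rule set_integrable_subset[OF absolutely_integrable_continuous[OF assms]])
     (auto simp: box_subset_cbox)

lemma set_integrable_cball_of_punctured_continuous:
  fixes F :: "'a::euclidean_space \<Rightarrow> real"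
  assumes "F absolutely_integrable_on cball 0 R" "continuous_on (cball 0 R - {0}) F"
  shows "set_integrable lborel (cball 0 R) F"
proof -
  have "(\<lambda>x. indicator (cball 0 R - {0}) x *\<^sub>R F x) \<in> borel_measurable borel"
    by (rule borel_measurable_continuous_on_indicator[OF _ assms(2)]) auto
  moreover have "(\<lambda>x. indicator ({0} \<inter> cball 0 R) x *\<^sub>R F 0) \<in> borel_measurable borel"
    by (intro borel_measurable_scaleR borel_measurable_indicator borel_measurable_const) auto
  moreover have "(\<lambda>x. indicator (cball 0 R) x *\<^sub>R F x) =
      (\<lambda>x. indicator (cball 0 R - {0}) x *\<^sub>R F x + indicator ({0} \<inter> cball 0 R) x *\<^sub>R F 0)"
    by (auto simp: indicator_def fun_eq_iff)
  ultimately have "(\<lambda>x. indicator (cball 0 R) x *\<^sub>R F x) \<in> borel_measurable borel"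
    by (simp only:) (rule borel_measurable_add)
  then have "(\<lambda>x. indicator (cball 0 R) x *\<^sub>R F x) \<in> borel_measurable lborel"
    by simp
  then show ?thesis
    using assms(1) integrable_completion unfolding set_integrable_def by blast
qed

lemma set_integral_cball_spherical:
  fixes F :: "real^3 \<Rightarrow> real"
  assumes F: "continuous_on (cball 0 R - {0}) F"
    and G: "continuous_on (cbox 0 (spherical_corner R)) G"
    and FG: "\<And>v. v \<in> box 0 (spherical_corner R) \<Longrightarrow> (v$3)\<^sup>2 * sin (v$1) * F (spherical v) = G v"
  shows "(LINT x:cball 0 R|lborel. F x) = integral (box 0 (spherical_corner R)) G"
proof -
  have "(\<lambda>v. (v$3)\<^sup>2 * sin (v$1) * F (spherical v)) absolutely_integrable_on box 0 (spherical_corner R)"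
    using absolutely_integrable_on_box_of_continuous[OF G] FG
    by (rule absolutely_integrable_spike[OF _ negligible_empty]) auto
  note polar = integral_cball_spherical[OF this]
  have "(LINT x:cball 0 R|lborel. F x) = integral (cball 0 R) F"
    using set_integrable_cball_of_punctured_continuous[OF polar(1) F]
    by (rule set_borel_integral_eq_integral(2))
  also have "\<dots> = integral (box 0 (spherical_corner R)) G"
    unfolding polar(2) using FG by (rule integral_cong)
  finally show ?thesis .
qed

lemma integral_nonneg_pointwise:
  fixes g :: "'a::euclidean_space \<Rightarrow> real"
  assumes "\<And>x. x \<in> S \<Longrightarrow> 0 \<le> g x"
  shows "0 \<le> integral S g"
proof (cases "g integrable_on S")
  case True
  then show ?thesis using assms by (rule integral_nonneg)
qed (simp add: not_integrable_integral)

section \<open>Elementary inequalities\<close>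

lemma even_le_shift:
  fixes f :: "real \<Rightarrow> real"
  assumes "\<And>v. f (-v) = f v" "\<And>v. (f has_real_derivative f' v) (at v)" "\<And>v. v \<ge> 0 \<Longrightarrow> f' v \<ge> 0"
    and "t \<ge> 0" "r \<ge> 0"
  shows "f (t - r) \<le> f (t + r)"
proof -
  have "f (t - r) = f \<bar>t - r\<bar>" using assms(1)[of "t - r"] by (cases "t - r \<ge> 0") auto
  also have "\<dots> \<le> f (t + r)"
  proof (rule DERIV_nonneg_imp_nondecreasing[where f=f])
    show "\<bar>t - r\<bar> \<le> t + r" using assms(4,5) by linarith
    fix x assume "\<bar>t - r\<bar> \<le> x"
    then have "x \<ge> 0" using abs_ge_zero[of "t - r"] by linarith
    then show "\<exists>y. (f has_real_derivative y) (at x) \<and> 0 \<le> y" using assms(2,3) by blast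
  qed
  finally show ?thesis .
qed

text \<open>Applied with \<open>a = f'(t-r)\<close>, \<open>b = f''(t-r)\<close>, \<open>Fm = f(t-r)\<close>, \<open>Fp = f(t+r)\<close>, \<open>y = \<psi>\<close>,
\<open>q = \<partial>\<^sub>r\<psi>\<close>, \<open>A = L\<psi>\<close>, \<open>B = Lbar \<psi>\<close>.\<close>

lemma cross_term_le:
  fixes C0 a b y q A B Fm Fp :: real
  assumes "C0 > 0" "Fm > 0" "Fm \<le> Fp" "a\<^sup>2 \<le> C0 * b * Fm" "A - B = 2*q"
  shows "2*a*y*q \<le> b*y\<^sup>2/2 + C0*(Fp*A\<^sup>2 + Fm*B\<^sup>2)"
proof -
  have "b \<ge> 0"
    using assms(1,2,4) zero_le_power2[of a] by (smt (verit) mult_pos_pos mult_pos_neg mult_neg_pos mult_nonneg_nonneg)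
  define X where "X = b*y\<^sup>2/2"
  define Y where "Y = 2*C0*Fm*q\<^sup>2"
  have "X \<ge> 0" "Y \<ge> 0" using \<open>b \<ge> 0\<close> assms by (simp_all add: X_def Y_def)
  have "(2*a*y*q)\<^sup>2 = 4*a\<^sup>2*y\<^sup>2*q\<^sup>2" by (simp add: power_mult_distrib)
  also have "\<dots> \<le> 4*(C0*b*Fm)*y\<^sup>2*q\<^sup>2" using assms(4) by (simp add: mult_right_mono)
  also have "\<dots> = 4*X*Y" by (simp add: X_def Y_def power2_eq_square)
  also have "\<dots> \<le> (X+Y)\<^sup>2" using zero_le_power2[of "X-Y"] by (simp add: power2_eq_square algebra_simps)
  finally have "2*a*y*q \<le> X + Y"
    by (rule power2_le_imp_le) (use \<open>X \<ge> 0\<close> \<open>Y \<ge> 0\<close> in linarith)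
  moreover have "2*q\<^sup>2 \<le> A\<^sup>2 + B\<^sup>2"
    using assms(5) zero_le_power2[of "A+B"] by (simp add: power2_eq_square algebra_simps)
  then have "C0*Fm*(2*q\<^sup>2) \<le> C0*Fm*(A\<^sup>2 + B\<^sup>2)"
    using assms(1,2) by (intro mult_left_mono) auto
  then have "Y \<le> C0*(Fm*A\<^sup>2 + Fm*B\<^sup>2)"
    by (simp add: Y_def algebra_simps)
  moreover have "C0*(Fm*A\<^sup>2) \<le> C0*(Fp*A\<^sup>2)"
    using assms(1,3) by (simp add: mult_right_mono)
  ultimately show ?thesis by (simp add: X_def algebra_simps)
qed

lemma has_integral_radial_flux:
  fixes g g' f' f'' :: "real \<Rightarrow> real"
  assumes g: "\<And>c. c \<in> {0..R} \<Longrightarrow> (g has_real_derivative g' c) (at c within {0..R})"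
    and f': "\<And>v. (f' has_real_derivative f'' v) (at v)" and "R \<ge> 0"
  shows "((\<lambda>c. f'' (t - c) * (c * g c)\<^sup>2 - 2 * f' (t - c) * (c * g c) * (g c + c * g' c))
      has_integral - f' (t - R) * R\<^sup>2 * (g R)\<^sup>2) {0..R}"
proof -
  define K where "K c = - f' (t - c) * (c * g c)\<^sup>2" for c
  have "(K has_real_derivative f'' (t - c) * (c * g c)\<^sup>2 - 2 * f' (t - c) * (c * g c) * (g c + c * g' c))
      (at c within {0..R})" if "c \<in> {0..R}" for c
  proof -
    have "((\<lambda>c. t - c) has_real_derivative -1) (at c within {0..R})"
      by (auto intro!: derivative_eq_intros)
    from DERIV_minus[OF DERIV_chain2[OF f' this]]
    have "((\<lambda>c. - f' (t - c)) has_real_derivative f'' (t - c)) (at c within {0..R})"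
      by simp
    moreover have "((\<lambda>c. c * g c) has_real_derivative g c + c * g' c) (at c within {0..R})"
      using DERIV_mult[OF DERIV_ident g[OF that]] by (simp add: algebra_simps)
    ultimately have "(K has_real_derivative
        f'' (t - c) * (c * g c)\<^sup>2 + of_nat 2 * ((g c + c * g' c) * (c * g c) ^ (2 - Suc 0)) * - f' (t - c))
        (at c within {0..R})"
      unfolding K_def by (intro DERIV_mult DERIV_power)
    then show ?thesis by (rule DERIV_cong) (simp add: algebra_simps)
  qed
  then have "((\<lambda>c. f'' (t - c) * (c * g c)\<^sup>2 - 2 * f' (t - c) * (c * g c) * (g c + c * g' c))
      has_integral K R - K 0) {0..R}"
    using \<open>R \<ge> 0\<close>
    by (intro fundamental_theorem_of_calculus) (auto simp: has_real_derivative_iff_has_vector_derivative)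
  then show ?thesis by (simp add: K_def power_mult_distrib mult.assoc)
qed

lemma Lop_Lbar_norm_mult:
  fixes \<phi> :: "real \<times> (real^3) \<Rightarrow> real"
  assumes d: "(\<phi> has_derivative D) (at (t,x))" and x: "x \<noteq> 0"
  shows "Lop (\<lambda>(s,y). norm y * \<phi> (s,y)) (t,x) = norm x * D (1, x /\<^sub>R norm x) + \<phi> (t,x)"
    and "Lbar (\<lambda>(s,y). norm y * \<phi> (s,y)) (t,x) = norm x * D (1, - (x /\<^sub>R norm x)) - \<phi> (t,x)"
proof -
  have "(snd has_derivative snd) (at (t,x))"
    by (rule bounded_linear_imp_has_derivative) (rule bounded_linear_snd)
  from has_derivative_compose[OF this, of norm "\<lambda>h. h \<bullet> sgn x"] has_derivative_norm[OF x]
  have "((\<lambda>p::real \<times> (real^3). norm (snd p)) has_derivative (\<lambda>h. snd h \<bullet> sgn x)) (at (t,x))"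
    by simp
  from has_derivative_mult[OF this d]
  have "frechet_derivative (\<lambda>(s,y). norm y * \<phi> (s,y)) (at (t,x)) =
      (\<lambda>h. norm x * D h + (snd h \<bullet> sgn x) * \<phi> (t,x))"
    by (simp add: case_prod_beta' frechet_derivative_at[symmetric])
  moreover have "(x /\<^sub>R norm x) \<bullet> sgn x = 1"
    using x by (simp add: sgn_div_norm dot_square_norm power2_eq_square)
  ultimately show "Lop (\<lambda>(s,y). norm y * \<phi> (s,y)) (t,x) = norm x * D (1, x /\<^sub>R norm x) + \<phi> (t,x)"
    and "Lbar (\<lambda>(s,y). norm y * \<phi> (s,y)) (t,x) = norm x * D (1, - (x /\<^sub>R norm x)) - \<phi> (t,x)"
    by (simp_all add: Lop_def Lbar_def)
qed

lemma smooth_on_has_derivative: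
  assumes "open U" "smooth_on U \<phi>" "p \<in> U"
  shows "(\<phi> has_derivative frechet_derivative \<phi> (at p)) (at p)"
proof -
  have "iter_dderiv [] \<phi> differentiable_on U" using assms(2) unfolding smooth_on_def by blast
  then have "\<phi> differentiable at p" using assms by (simp add: differentiable_on_eq_differentiable_at)
  then show ?thesis by (simp add: frechet_derivative_works)
qed

lemma smooth_on_continuous_on:
  assumes "smooth_on U \<phi>"
  shows "continuous_on U \<phi>"
proof -
  have "iter_dderiv [] \<phi> differentiable_on U" using assms unfolding smooth_on_def by blast
  then show ?thesis by (simp add: differentiable_imp_continuous_on)
qed

lemma smooth_on_continuous_on_derivative:
  assumes "smooth_on U \<phi>"
  shows "continuous_on U (\<lambda>p. frechet_derivative \<phi> (at p) h)"
proof -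
  have "iter_dderiv [h] \<phi> differentiable_on U" using assms unfolding smooth_on_def by blast
  then show ?thesis by (simp add: differentiable_imp_continuous_on)
qed

section \<open>The estimate\<close>

locale null_frame_estimate =
  fixes C0 t R :: real and f f' f'' :: "real \<Rightarrow> real"
    and \<phi> :: "real \<times> (real^3) \<Rightarrow> real" and U :: "(real \<times> (real^3)) set"
  assumes C0_pos: "C0 > 0"
    and f_pos: "\<And>v. f v > 0" and f_even: "\<And>v. f (-v) = f v"
    and f_deriv: "\<And>v. (f has_real_derivative f' v) (at v)"
    and f'_deriv: "\<And>v. (f' has_real_derivative f'' v) (at v)"
    and f''_cont: "continuous_on UNIV f''"
    and f'_nonneg: "\<And>v. v \<ge> 0 \<Longrightarrow> f' v \<ge> 0"
    and f'_sq_le: "\<And>v. (f' v)\<^sup>2 \<le> C0 * f'' v * f v"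
    and t_nonneg: "t \<ge> 0" and R_pos: "R > 0"
    and U_open: "open U" and slice_subset_U: "{t} \<times> cball 0 R \<subseteq> U" and \<phi>_smooth: "smooth_on U \<phi>"
begin

definition D :: "real \<times> (real^3) \<Rightarrow> real \<times> (real^3) \<Rightarrow> real" where
  "D p = frechet_derivative \<phi> (at p)"

lemma \<phi>_has_derivative: "p \<in> U \<Longrightarrow> (\<phi> has_derivative D p) (at p)"
  unfolding D_def using U_open \<phi>_smooth by (rule smooth_on_has_derivative)

lemma continuous_on_D:
  assumes q: "continuous_on X q" "q ` X \<subseteq> U" and w: "continuous_on X w"
  shows "continuous_on X (\<lambda>v. D (q v) (w v))"
proof (rule continuous_on_eq)
  have "continuous_on X (\<lambda>v. D (q v) i)" for i
    using continuous_on_compose2[OF smooth_on_continuous_on_derivative[OF \<phi>_smooth] q]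
    by (simp add: D_def)
  then show "continuous_on X (\<lambda>v. \<Sum>i\<in>Basis. (w v \<bullet> i) * D (q v) i)"
    by (intro continuous_intros w)
  show "(\<Sum>i\<in>Basis. (w v \<bullet> i) * D (q v) i) = D (q v) (w v)" if "v \<in> X" for v
    using Linear_Algebra.linear_componentwise[OF has_derivative_linear[OF \<phi>_has_derivative], of "q v" "w v" 1] q that
    by auto
qed

lemma continuous_on_f: "continuous_on X f" and continuous_on_f': "continuous_on X f'"
  and continuous_on_f'': "continuous_on X f''"
  using f_deriv f'_deriv continuous_on_subset[OF f''_cont]
  by (auto intro!: continuous_at_imp_continuous_on DERIV_isCont)

text \<open>Spherical coordinates \<open>v = (\<theta>, \<phi>, r)\<close> on the slice \<open>{t} \<times> cball 0 R\<close>: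
\<open>rphi\<close>, \<open>L_rphi\<close>, \<open>Lbar_rphi\<close> and \<open>dr_rphi\<close> are \<open>r\<phi>\<close>, \<open>L(r\<phi>)\<close>, \<open>Lbar(r\<phi>)\<close> and \<open>\<partial>\<^sub>r(r\<phi>)\<close> at the point
\<open>(t, r\<omega>)\<close>, and the densities include the volume factor \<open>sin \<theta>\<close> but not \<open>r\<^sup>2\<close>, which is absorbed
into \<open>(r\<phi>)\<^sup>2\<close>.\<close>

definition ray :: "real^3 \<Rightarrow> real \<times> (real^3)" where
  "ray v = (t, spherical v)"

definition direction :: "real^3 \<Rightarrow> real^3" where
  "direction v = sph (v$1) (v$2)"

definition rphi :: "real^3 \<Rightarrow> real" where
  "rphi v = v$3 * \<phi> (ray v)"

definition L_rphi :: "real^3 \<Rightarrow> real" where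
  "L_rphi v = \<phi> (ray v) + v$3 * D (ray v) (1, direction v)"

definition Lbar_rphi :: "real^3 \<Rightarrow> real" where
  "Lbar_rphi v = - \<phi> (ray v) + v$3 * D (ray v) (1, - direction v)"

definition dr_rphi :: "real^3 \<Rightarrow> real" where
  "dr_rphi v = \<phi> (ray v) + v$3 * D (ray v) (0, direction v)"

definition lhs_density :: "real^3 \<Rightarrow> real" where
  "lhs_density v = sin (v$1) * f'' (t - v$3) * (rphi v)\<^sup>2"

definition rhs_density :: "real^3 \<Rightarrow> real" where
  "rhs_density v = sin (v$1) * (f (t + v$3) * (L_rphi v)\<^sup>2 + f (t - v$3) * (Lbar_rphi v)\<^sup>2)"

definition flux_density :: "real^3 \<Rightarrow> real" where
  "flux_density v = sin (v$1) * (f'' (t - v$3) * (rphi v)\<^sup>2 - 2 * f' (t - v$3) * rphi v * dr_rphi v)"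

lemma ray_in_U: "v \<in> cbox 0 (spherical_corner R) \<Longrightarrow> ray v \<in> U"
  using spherical_cbox_subset_cball slice_subset_U by (auto simp: ray_def)

lemma continuous_on_densities:
  "continuous_on (cbox 0 (spherical_corner R)) lhs_density"
  "continuous_on (cbox 0 (spherical_corner R)) rhs_density"
  "continuous_on (cbox 0 (spherical_corner R)) flux_density"
proof -
  let ?K = "cbox 0 (spherical_corner R)"
  have ray: "continuous_on ?K ray" "ray ` ?K \<subseteq> U"
    using ray_in_U by (auto simp: ray_def intro!: continuous_on_Pair continuous_on_spherical)
  have dir: "continuous_on ?K direction"
    unfolding direction_def by (intro continuous_intros)
  have D: "continuous_on ?K (\<lambda>v. D (ray v) (a, direction v))"
    "continuous_on ?K (\<lambda>v. D (ray v) (a, - direction v))" for a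
    by (intro continuous_on_D ray continuous_intros dir)+
  have \<phi>: "continuous_on ?K (\<lambda>v. \<phi> (ray v))"
    using continuous_on_compose2[OF smooth_on_continuous_on[OF \<phi>_smooth] ray] .
  have shift: "continuous_on ?K (\<lambda>v. h (t - v$3))" "continuous_on ?K (\<lambda>v. h (t + v$3))"
    if "continuous_on UNIV h" for h :: "real \<Rightarrow> real"
    by (rule continuous_on_compose2[OF that]; auto intro!: continuous_intros)+
  show "continuous_on ?K lhs_density" "continuous_on ?K rhs_density" "continuous_on ?K flux_density"
    unfolding lhs_density_def rhs_density_def flux_density_def rphi_def L_rphi_def Lbar_rphi_def dr_rphi_def
    by (intro continuous_intros \<phi> D shift continuous_on_f continuous_on_f' continuous_on_f'')+
qed

lemma L_rphi_minus_Lbar_rphi: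
  assumes "v \<in> cbox 0 (spherical_corner R)"
  shows "L_rphi v - Lbar_rphi v = 2 * dr_rphi v"
proof -
  let ?D = "D (ray v)" and ?\<omega> = "direction v"
  have lin: "linear ?D" using has_derivative_linear[OF \<phi>_has_derivative[OF ray_in_U[OF assms]]] .
  have "(1::real, ?\<omega>) - (1, - ?\<omega>) = 2 *\<^sub>R (0, ?\<omega>)" by (simp add: prod_eq_iff scaleR_2)
  then have "?D (1, ?\<omega>) - ?D (1, - ?\<omega>) = 2 * ?D (0, ?\<omega>)"
    by (metis linear_diff[OF lin] linear_scale[OF lin] real_scaleR_def)
  then show ?thesis by (simp add: L_rphi_def Lbar_rphi_def dr_rphi_def algebra_simps)
qed

lemma lhs_density_le:
  assumes v: "v \<in> cbox 0 (spherical_corner R)"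
  shows "lhs_density v / 2 \<le> flux_density v + C0 * rhs_density v"
proof -
  have r: "v$3 \<ge> 0" and sin: "sin (v$1) \<ge> 0"
    using v by (auto simp: mem_cbox_spherical_corner sin_ge_zero)
  have "2 * f' (t - v$3) * rphi v * dr_rphi v \<le>
      f'' (t - v$3) * (rphi v)\<^sup>2 / 2 + C0 * (f (t + v$3) * (L_rphi v)\<^sup>2 + f (t - v$3) * (Lbar_rphi v)\<^sup>2)"
    by (rule cross_term_le[OF C0_pos f_pos even_le_shift[OF f_even f_deriv f'_nonneg t_nonneg r]
          f'_sq_le L_rphi_minus_Lbar_rphi[OF v]])
  from mult_left_mono[OF this sin] show ?thesis
    unfolding lhs_density_def flux_density_def rhs_density_def by (simp add: algebra_simps)
qed

lemma integral_lhs_density: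
  "(LINT x:cball 0 R|lborel. f'' (t - norm x) * (\<phi> (t, x))\<^sup>2) =
    integral (box 0 (spherical_corner R)) lhs_density"
proof (rule set_integral_cball_spherical[OF _ continuous_on_densities(1)])
  have "(\<lambda>x. (t, x)) ` (cball 0 R - {0}) \<subseteq> U" using slice_subset_U by auto
  then show "continuous_on (cball 0 R - {0}) (\<lambda>x. f'' (t - norm x) * (\<phi> (t, x))\<^sup>2)"
    by (intro continuous_intros continuous_on_compose2[OF continuous_on_f'']
        continuous_on_compose2[OF smooth_on_continuous_on[OF \<phi>_smooth]]) auto
  fix v assume "v \<in> box 0 (spherical_corner R)"
  then have "v$3 > 0" by (simp add: mem_box_spherical_corner)
  then show "(v$3)\<^sup>2 * sin (v$1) * (f'' (t - norm (spherical v)) * (\<phi> (t, spherical v))\<^sup>2) = lhs_density v"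
    by (simp add: lhs_density_def rphi_def ray_def norm_spherical power_mult_distrib)
qed

definition rhs_integrand :: "real^3 \<Rightarrow> real" where
  "rhs_integrand x =
    (f (t + norm x) * (Lop (\<lambda>(s,y). norm y * \<phi> (s,y)) (t, x))\<^sup>2
     + f (t - norm x) * (Lbar (\<lambda>(s,y). norm y * \<phi> (s,y)) (t, x))\<^sup>2) / (norm x)\<^sup>2"

lemma rhs_integrand_eq:
  assumes "x \<in> cball 0 R - {0}"
  shows "rhs_integrand x =
    (f (t + norm x) * (norm x * D (t,x) (1, 1 *\<^sub>R (x /\<^sub>R norm x)) + \<phi> (t,x))\<^sup>2
     + f (t - norm x) * (norm x * D (t,x) (1, -1 *\<^sub>R (x /\<^sub>R norm x)) - \<phi> (t,x))\<^sup>2) / (norm x)\<^sup>2"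
proof -
  have "(t, x) \<in> U" using assms slice_subset_U by auto
  from Lop_Lbar_norm_mult[OF \<phi>_has_derivative[OF this]] assms show ?thesis
    by (simp add: rhs_integrand_def)
qed

lemma continuous_on_rhs_integrand: "continuous_on (cball 0 R - {0}) rhs_integrand"
proof -
  have U: "(\<lambda>x. (t, x)) ` (cball 0 R - {0}) \<subseteq> U" using slice_subset_U by auto
  have \<phi>: "continuous_on (cball 0 R - {0}) (\<lambda>x. \<phi> (t, x))"
    using U by (intro continuous_on_compose2[OF smooth_on_continuous_on[OF \<phi>_smooth]] continuous_intros)
  have D: "continuous_on (cball 0 R - {0}) (\<lambda>x. D (t, x) (1, s *\<^sub>R (x /\<^sub>R norm x)))" for s :: real
    using U by (intro continuous_on_D continuous_intros) auto
  show ?thesis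
    by (rule continuous_on_eq[OF _ rhs_integrand_eq[THEN sym]])
       (intro continuous_intros \<phi> D continuous_on_compose2[OF continuous_on_f]; auto)
qed

lemma integral_rhs_density:
  "(LINT x:cball 0 R|lborel. rhs_integrand x) = integral (box 0 (spherical_corner R)) rhs_density"
proof (rule set_integral_cball_spherical[OF continuous_on_rhs_integrand continuous_on_densities(2)])
  fix v assume v: "v \<in> box 0 (spherical_corner R)"
  then have r: "v$3 > 0" by (simp add: mem_box_spherical_corner)
  then have "norm (spherical v) = v$3" by (simp add: norm_spherical)
  with r have "spherical v \<noteq> 0" by auto
  have dir: "spherical v /\<^sub>R v$3 = direction v"
    using r by (simp add: spherical_def direction_def)
  have "(\<phi> has_derivative D (t, spherical v)) (at (t, spherical v))"
    using \<phi>_has_derivative[OF ray_in_U] v box_subset_cbox by (auto simp: ray_def)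
  from Lop_Lbar_norm_mult[OF this \<open>spherical v \<noteq> 0\<close>] r
  show "(v$3)\<^sup>2 * sin (v$1) * rhs_integrand (spherical v) = rhs_density v"
    by (simp add: dir rhs_integrand_def rhs_density_def L_rphi_def Lbar_rphi_def ray_def
        norm_spherical add.commute)
qed

lemma has_real_derivative_along_ray:
  assumes "norm w = 1" "c \<in> {0..R}"
  shows "((\<lambda>c. \<phi> (t, c *\<^sub>R w)) has_real_derivative D (t, c *\<^sub>R w) (0, w)) (at c within {0..R})"
proof -
  have "(t, c *\<^sub>R w) \<in> U" using assms slice_subset_U by auto
  note D = \<phi>_has_derivative[OF this]
  have "((\<lambda>c. (t, c *\<^sub>R w)) has_derivative (\<lambda>h. (0, h *\<^sub>R w))) (at c within {0..R})"
    by (auto intro!: derivative_eq_intros)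
  from has_derivative_compose[OF this D]
  have "((\<lambda>c. \<phi> (t, c *\<^sub>R w)) has_derivative (\<lambda>h. D (t, c *\<^sub>R w) (0, h *\<^sub>R w))) (at c within {0..R})"
    by simp
  moreover have "(\<lambda>h. D (t, c *\<^sub>R w) (0, h *\<^sub>R w)) = (*) (D (t, c *\<^sub>R w) (0, w))"
    using linear_scale[OF has_derivative_linear[OF D], of _ "(0, w)"] by (auto simp: mult.commute)
  ultimately show ?thesis by (simp add: has_field_derivative_def)
qed

lemma continuous_on_boundary_integrand:
  "continuous_on (sphere 0 1) (\<lambda>\<omega>. (\<phi> (t, R *\<^sub>R \<omega>))\<^sup>2 * R\<^sup>2)"
  using slice_subset_U R_pos
  by (intro continuous_intros continuous_on_compose2[OF smooth_on_continuous_on[OF \<phi>_smooth]]) auto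

lemma integral_flux_density:
  "integral (box 0 (spherical_corner R)) flux_density =
    - f' (t - R) * sphere_integral (\<lambda>\<omega>. (\<phi> (t, R *\<^sub>R \<omega>))\<^sup>2 * R\<^sup>2)"
proof -
  have radial: "integral {0..R} (\<lambda>c. flux_density (vector [a,b,c])) =
      - f' (t - R) * ((\<phi> (t, R *\<^sub>R sph a b))\<^sup>2 * R\<^sup>2 * sin a)" for a b
  proof -
    let ?g = "\<lambda>c. \<phi> (t, c *\<^sub>R sph a b)" and ?g' = "\<lambda>c. D (t, c *\<^sub>R sph a b) (0, sph a b)"
    define h where "h c = f'' (t - c) * (c * ?g c)\<^sup>2 - 2 * f' (t - c) * (c * ?g c) * (?g c + c * ?g' c)" for c
    have "(\<lambda>c. flux_density (vector [a,b,c])) = (\<lambda>c. sin a * h c)"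
      by (simp add: h_def flux_density_def rphi_def dr_rphi_def ray_def spherical_def direction_def)
    moreover have "(h has_integral - f' (t - R) * R\<^sup>2 * (?g R)\<^sup>2) {0..R}"
      unfolding h_def using R_pos
      by (intro has_integral_radial_flux has_real_derivative_along_ray f'_deriv) auto
    ultimately show ?thesis by (simp add: integral_unique)
  qed
  note sphere = sphere_integral_eq_integral[OF continuous_on_boundary_integrand]
  have "integral (box 0 (spherical_corner R)) flux_density =
      integral {0..pi} (\<lambda>a. integral {0..2*pi} (\<lambda>b. integral {0..R} (\<lambda>c. flux_density (vector [a,b,c]))))"
    using integral_cbox3_iterated[OF continuous_on_densities(3)]
    by (simp add: integral_open_interval spherical_corner_def)
  then show ?thesis by (simp add: radial sphere mult.assoc)
qed

lemma sphere_integral_nonneg: "sphere_integral (\<lambda>\<omega>. (\<phi> (t, R *\<^sub>R \<omega>))\<^sup>2 * R\<^sup>2) \<ge> 0"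
  unfolding sphere_integral_eq_integral[OF continuous_on_boundary_integrand]
  by (intro integral_nonneg_pointwise mult_nonneg_nonneg) (auto simp: sin_ge_zero)

lemma weighted_estimate:
  "(LINT x:cball 0 R|lborel. f'' (t - norm x) * (\<phi> (t, x))\<^sup>2)
     \<le> (2 + 2*C0) * ((LINT x:cball 0 R|lborel.
               (f (t + norm x) * (Lop (\<lambda>(s,y). norm y * \<phi> (s,y)) (t, x))\<^sup>2
                + f (t - norm x) * (Lbar (\<lambda>(s,y). norm y * \<phi> (s,y)) (t, x))\<^sup>2)
               / (norm x)\<^sup>2)
            + \<bar>f' (t - R)\<bar> * sphere_integral (\<lambda>\<omega>. (\<phi> (t, R *\<^sub>R \<omega>))\<^sup>2 * R\<^sup>2))"
proof -
  let ?S = "box 0 (spherical_corner R)" and ?X = "sphere_integral (\<lambda>\<omega>. (\<phi> (t, R *\<^sub>R \<omega>))\<^sup>2 * R\<^sup>2)"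
  have int: "g integrable_on ?S" if "continuous_on (cbox 0 (spherical_corner R)) g" for g :: "real^3 \<Rightarrow> real"
    using absolutely_integrable_on_box_of_continuous[OF that] set_lebesgue_integral_eq_integral(1) by blast
  have rhs_nonneg: "integral ?S rhs_density \<ge> 0"
    by (rule integral_nonneg_pointwise)
       (auto simp: rhs_density_def mem_box_spherical_corner sin_ge_zero less_imp_le[OF f_pos])
  have "integral ?S lhs_density \<le> integral ?S (\<lambda>v. 2 * flux_density v + 2 * C0 * rhs_density v)"
    using lhs_density_le box_subset_cbox
    by (intro integral_le int continuous_intros continuous_on_densities) fastforce+
  also have "\<dots> = 2 * integral ?S flux_density + 2 * C0 * integral ?S rhs_density"
    by (simp add: integral_add int continuous_on_densities continuous_intros)
  also have "\<dots> = - 2 * f' (t - R) * ?X + 2 * C0 * integral ?S rhs_density"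
    by (simp add: integral_flux_density)
  also have "\<dots> \<le> (2 + 2*C0) * (integral ?S rhs_density + \<bar>f' (t - R)\<bar> * ?X)"
  proof -
    have "- f' (t - R) * ?X \<le> \<bar>f' (t - R)\<bar> * ?X"
      using sphere_integral_nonneg by (intro mult_right_mono) auto
    moreover have "0 \<le> C0 * (\<bar>f' (t - R)\<bar> * ?X)" "0 \<le> integral ?S rhs_density"
      using C0_pos sphere_integral_nonneg rhs_nonneg by simp_all
    ultimately show ?thesis by (simp add: algebra_simps)
  qed
  finally show ?thesis using integral_rhs_density by (simp add: integral_lhs_density rhs_integrand_def)
qed

end

theorem lemma2p9:
  fixes C0 :: real
  assumes "C0 > 0"
  shows "\<exists>C>0. \<forall>(f::real\<Rightarrow>real) f' f'' (t::real) (R::real) (\<phi>::real \<times> (real^3) \<Rightarrow> real).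
     (\<forall>v. f v > 0) \<and> (\<forall>v. f (-v) = f v) \<and>
     (\<forall>v. (f has_real_derivative f' v) (at v)) \<and>
     (\<forall>v. (f' has_real_derivative f'' v) (at v)) \<and> continuous_on UNIV f'' \<and>
     (\<forall>v\<ge>0. f' v \<ge> 0) \<and>
     (\<forall>v. (f' v)\<^sup>2 \<le> C0 * f'' v * f v) \<and>
     t \<ge> 0 \<and> R > 0 \<and>
     (\<exists>U. open U \<and> {t} \<times> cball 0 R \<subseteq> U \<and> smooth_on U \<phi>)
     \<longrightarrow>
     (LINT x:cball 0 R|lborel. f'' (t - norm x) * (\<phi> (t, x))\<^sup>2)
       \<le> C * ((LINT x:cball 0 R|lborel.
                 (f (t + norm x) * (Lop (\<lambda>(s,y). norm y * \<phi> (s,y)) (t, x))\<^sup>2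
                  + f (t - norm x) * (Lbar (\<lambda>(s,y). norm y * \<phi> (s,y)) (t, x))\<^sup>2)
                 / (norm x)\<^sup>2)
              + \<bar>f' (t - R)\<bar> * sphere_integral (\<lambda>\<omega>. (\<phi> (t, R *\<^sub>R \<omega>))\<^sup>2 * R\<^sup>2))"
  apply (intro exI[of _ "2 + 2*C0"] conjI allI impI)
  subgoal using assms by simp
  subgoal premises hyps for f f' f'' t R \<phi>
  proof -
    obtain U where "open U" "{t} \<times> cball 0 R \<subseteq> U" "smooth_on U \<phi>" using hyps by blast
    with hyps assms interpret null_frame_estimate C0 t R f f' f'' \<phi> U
      by unfold_locales auto
    show ?thesis by (rule weighted_estimate)
  qed
  done

end
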